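(* For $W>0$ let $X_W\sim\operatorname{IG}(W^{-1},1)$, let $\gamma=-\int_0^\infty e^{-t}\log t\,dt$ be the Euler–Mascheroni constant and $c_2:=\gamma+\log2$. Then $$E[\log X_W]=-\log W-\int_0^\infty\frac{e^{-u}}{u+2W}\,du=e^{2W}\int_0^{2W}(\log t+\gamma)e^{-t}\,dt+c_2.$$ Moreover, $-\log(W+\frac12)\le E[\log X_W]\le\min\{-\log W,c_2\}$ for all $W>0$; $c_2+4W(\log W+c_2-1)\le E[\log X_W]\le c_2$ for $0<W\le\frac12e^{-\gamma}$; and $\lim_{W\to0}E[\log X_W]=c_2$.
   Context: $\operatorname{IG}(\mu,\lambda)$, $\mu,\lambda>0$, denotes the inverse Gaussian distribution with density $f(x)=\sqrt{\frac{\lambda}{2\pi x^3}}\exp\big(-\frac{\lambda(x-\mu)^2}{2\mu^2x}\big)$, $x>0$. *)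

theory Defs
  imports "HOL-Analysis.Analysis"
begin

definition IG_density :: "real \<Rightarrow> real \<Rightarrow> real \<Rightarrow> real" where
  "IG_density m lam x =
     sqrt (lam / (2 * pi * x ^ 3)) * exp (- (lam * (x - m)\<^sup>2) / (2 * m\<^sup>2 * x))"

definition E_log_IG :: "real \<Rightarrow> real" where
  "E_log_IG W = (LINT x:{0<..}|lborel. ln x * IG_density (1 / W) 1 x)"

end

theory Submission
  imports Defs "HOL-Probability.Probability" "HOL-Real_Asymp.Real_Asymp"
begin

text \<open>
  The substitution \<open>x = m exp (2 arsinh s)\<close> carries \<open>IG(m, \<lambda>)\<close> to the density of
  \<open>N(0, m / (4 \<lambda>))\<close> times \<open>1 - s / sqrt (s\<^sup>2 + 1)\<close>, and \<open>ln x\<close> to \<open>ln m + 2 arsinh s\<close>.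
  The odd parts integrate to zero, so \<open>E[ln X] = ln m - 2 E[S arsinh S / sqrt (S\<^sup>2 + 1)]\<close> for a
  centred normal \<open>S\<close>. Writing \<open>arsinh s / sqrt (s\<^sup>2 + 1)\<close> as \<open>\<integral>\<^sub>0\<^sup>s dt / (s\<^sup>2 + 1 - t\<^sup>2)\<close>,
  exchanging the integrations and shifting \<open>s\<^sup>2 = t\<^sup>2 + b\<close> factorises this expectation into a
  half-Gaussian integral times \<open>\<integral>\<^sub>0\<^sup>\<infinity> exp (-2 W b) / (1 + b) db\<close>, which gives the first
  formula. The second follows by integrating by parts against \<open>\<integral>\<^sub>0\<^sup>\<infinity> (ln t + \<gamma>) e\<^sup>-\<^sup>t dt = 0\<close>,
  that is \<open>\<Gamma>'(1) = -\<gamma>\<close>. The bounds come from the sign change of \<open>ln t + \<gamma>\<close> at \<open>e\<^sup>-\<^sup>\<gamma>\<close>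
  and from comparing the weight \<open>e\<^sup>-\<^sup>u\<close> with the indicator of \<open>[0, 1]\<close>; the limit follows
  by squeezing.
\<close>

section \<open>The arsinh substitution\<close>

lemma exp_minus_arsinh_real: "exp (- arsinh x) = sqrt (x\<^sup>2 + 1) - x"
  using cosh_minus_sinh[of "arsinh x"] by (simp add: cosh_arsinh_real)

lemma abs_arsinh_le: "\<bar>arsinh x\<bar> \<le> \<bar>x :: real\<bar>"
  using real_le_abs_sinh[of "arsinh x"] sinh_field_def[of "arsinh x"] by (simp add: exp_minus)

lemma arsinh_real_nonneg_iff [simp]: "arsinh x \<ge> 0 \<longleftrightarrow> x \<ge> (0 :: real)"
  using arsinh_real_neg_iff[of x] by linarith

lemma IG_density_arsinh_subst:
  fixes m lam s :: real
  assumes m: "m > 0" and lam: "lam > 0"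
  shows "2 * m * exp (2 * arsinh s) / sqrt (s\<^sup>2 + 1) * IG_density m lam (m * exp (2 * arsinh s))
       = normal_density 0 (sqrt (m / lam) / 2) s * (1 - s / sqrt (s\<^sup>2 + 1))"
proof -
  define p where "p = exp (arsinh s)"
  define R where "R = sqrt (s\<^sup>2 + 1)"
  have p: "p > 0" and R: "R > 0" by (simp_all add: p_def R_def add_nonneg_pos)
  have p_diff: "p - 1 / p = 2 * s"
    using sinh_arsinh_real[of s] by (simp add: p_def sinh_field_def exp_minus field_simps)
  have inv_p: "1 / p = R - s"
    using exp_minus_arsinh_real[of s] by (simp add: p_def R_def exp_minus inverse_eq_divide)
  have exp2: "exp (2 * arsinh s) = p\<^sup>2"
    by (simp add: p_def power2_eq_square exp_add[symmetric])
  have exponent: "- (lam * (m * p\<^sup>2 - m)\<^sup>2) / (2 * m\<^sup>2 * (m * p\<^sup>2)) = - (s - 0)\<^sup>2 / (2 * (sqrt (m / lam) / 2)\<^sup>2)"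
  proof -
    have "(m * p\<^sup>2 - m)\<^sup>2 / (m * p\<^sup>2) = m * (p - 1 / p)\<^sup>2"
      using m p by (simp add: field_simps power2_eq_square)
    then show ?thesis
      using m lam p unfolding p_diff by (simp add: field_simps power2_eq_square)
  qed
  have root: "sqrt (lam / (2 * pi * (m * p\<^sup>2) ^ 3)) = sqrt (lam / m) / (m * p ^ 3 * sqrt (2 * pi))"
    using m lam p by (intro real_sqrt_unique)
       (simp_all add: power_divide power_mult_distrib field_simps, simp add: power3_eq_cube power2_eq_square)
  have "2 * m * p\<^sup>2 / R * (sqrt (lam / m) / (m * p ^ 3 * sqrt (2 * pi)))
      = 2 * sqrt (lam / m) / sqrt (2 * pi) * (1 / p / R)"
    using m p R by (simp add: field_simps power2_eq_square power3_eq_cube)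
  also have "1 / p / R = 1 - s / R"
    using R by (simp add: inv_p field_simps)
  also have "2 * sqrt (lam / m) / sqrt (2 * pi) = 1 / sqrt (2 * pi * (sqrt (m / lam) / 2)\<^sup>2)"
    using m lam by (simp add: real_sqrt_mult real_sqrt_divide field_simps)
  finally have factor: "2 * m * p\<^sup>2 / R * (sqrt (lam / m) / (m * p ^ 3 * sqrt (2 * pi)))
      = 1 / sqrt (2 * pi * (sqrt (m / lam) / 2)\<^sup>2) * (1 - s / R)" .
  show ?thesis
    unfolding IG_density_def normal_density_def exp2 exponent root R_def[symmetric]
    by (subst mult.assoc[symmetric], subst factor) (simp only: mult_ac)
qed

lemma borel_measurable_arsinh [measurable]: "(arsinh :: real \<Rightarrow> real) \<in> borel_measurable borel"
  unfolding arsinh_real_def[abs_def] by measurable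

lemma borel_measurable_IG_density [measurable]: "IG_density m lam \<in> borel_measurable borel"
  unfolding IG_density_def[abs_def] by measurable

lemma integrable_normal_density_mult:
  fixes f :: "real \<Rightarrow> real"
  assumes \<sigma>: "\<sigma> > 0" and [measurable]: "f \<in> borel_measurable borel"
    and bound: "\<And>x. \<bar>f x\<bar> \<le> a + b * \<bar>x - \<mu>\<bar>"
  shows "integrable lborel (\<lambda>x. normal_density \<mu> \<sigma> x * f x)"
proof (rule Bochner_Integration.integrable_bound)
  show "integrable lborel (\<lambda>x. a * normal_density \<mu> \<sigma> x + b * (normal_density \<mu> \<sigma> x * \<bar>x - \<mu>\<bar> ^ 1))"
    using integrable_normal_moment_abs[OF \<sigma>, of \<mu> 1] \<sigma> by auto
  show "AE x in lborel. norm (normal_density \<mu> \<sigma> x * f x)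
          \<le> norm (a * normal_density \<mu> \<sigma> x + b * (normal_density \<mu> \<sigma> x * \<bar>x - \<mu>\<bar> ^ 1))"
  proof (rule AE_I2)
    fix x
    have "\<bar>normal_density \<mu> \<sigma> x * f x\<bar> \<le> normal_density \<mu> \<sigma> x * (a + b * \<bar>x - \<mu>\<bar>)"
      unfolding abs_mult abs_of_nonneg[OF normal_density_nonneg] by (intro mult_left_mono bound) simp
    also have "\<dots> \<le> \<bar>a * normal_density \<mu> \<sigma> x + b * (normal_density \<mu> \<sigma> x * \<bar>x - \<mu>\<bar> ^ 1)\<bar>"
      by (simp add: algebra_simps)
    finally show "norm (normal_density \<mu> \<sigma> x * f x)
          \<le> norm (a * normal_density \<mu> \<sigma> x + b * (normal_density \<mu> \<sigma> x * \<bar>x - \<mu>\<bar> ^ 1))"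
      by simp
  qed
qed measurable

lemma abs_div_sqrt_square_plus_one_le: "\<bar>x / sqrt (x\<^sup>2 + 1)\<bar> \<le> (1::real)"
proof -
  have pos: "sqrt (x\<^sup>2 + 1) > 0"
    by (simp add: add_nonneg_pos)
  have "\<bar>x\<bar> \<le> sqrt (x\<^sup>2 + 1)"
    using real_sqrt_le_mono[of "x\<^sup>2" "x\<^sup>2 + 1"] by simp
  then show ?thesis
    unfolding abs_divide abs_of_pos[OF pos] divide_le_eq_1_pos[OF pos] .
qed

lemma integrable_normal_arsinh:
  assumes "\<sigma> > 0"
  shows "integrable lborel (\<lambda>s. normal_density 0 \<sigma> s * (1 - s / sqrt (s\<^sup>2 + 1)) * (c + 2 * arsinh s))"
  unfolding mult.assoc
proof (rule integrable_normal_density_mult[OF assms])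
  fix s :: real
  have "\<bar>1 - y\<bar> \<le> 2" if "\<bar>y\<bar> \<le> 1" for y :: real
    using that by linarith
  then have "\<bar>(1 - s / sqrt (s\<^sup>2 + 1)) * (c + 2 * arsinh s)\<bar> \<le> 2 * (\<bar>c\<bar> + 2 * \<bar>s\<bar>)"
    unfolding abs_mult using abs_div_sqrt_square_plus_one_le[of s] abs_arsinh_le[of s]
    by (intro mult_mono) (auto simp del: abs_divide)
  then show "\<bar>(1 - s / sqrt (s\<^sup>2 + 1)) * (c + 2 * arsinh s)\<bar> \<le> 2 * \<bar>c\<bar> + 4 * \<bar>s - 0\<bar>"
    by simp
qed measurable

lemma lborel_integral_odd_eq_0:
  fixes f :: "real \<Rightarrow> real"
  assumes "\<And>x. f (- x) = - f x"
  shows "(\<integral>x. f x \<partial>lborel) = 0"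
  using lborel_integral_real_affine[of "-1" f 0] assms by simp

lemma integral_normal_arsinh_symmetrise:
  assumes "\<sigma> > 0"
  shows "(\<integral>s. normal_density 0 \<sigma> s * (1 - s / sqrt (s\<^sup>2 + 1)) * (c + 2 * arsinh s) \<partial>lborel)
       = c - 2 * (\<integral>s. normal_density 0 \<sigma> s * (s * arsinh s / sqrt (s\<^sup>2 + 1)) \<partial>lborel)"
proof -
  define n where "n = normal_density 0 \<sigma>"
  define A where "A s = n s * arsinh s" for s
  define B where "B s = n s * (s / sqrt (s\<^sup>2 + 1))" for s
  define C where "C s = n s * (s * arsinh s / sqrt (s\<^sup>2 + 1))" for s
  have "integral\<^sup>L lborel A = 0" and "integral\<^sup>L lborel B = 0"
    unfolding A_def[abs_def] B_def[abs_def] n_def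
    by (rule lborel_integral_odd_eq_0, simp add: normal_density_def)+
  moreover have "integrable lborel A"
    unfolding A_def[abs_def] n_def
    by (rule integrable_normal_density_mult[OF assms, where a=0 and b=1]) (use abs_arsinh_le in auto)
  moreover have "integrable lborel B"
    unfolding B_def[abs_def] n_def
    by (rule integrable_normal_density_mult[OF assms, where a=1 and b=0])
       (use abs_div_sqrt_square_plus_one_le in auto)
  moreover have "integrable lborel C"
    unfolding C_def[abs_def] n_def
  proof (rule integrable_normal_density_mult[OF assms, where a=0 and b=1])
    show "\<bar>s * arsinh s / sqrt (s\<^sup>2 + 1)\<bar> \<le> 0 + 1 * \<bar>s - 0\<bar>" for s
      using mult_mono[OF abs_div_sqrt_square_plus_one_le[of s] abs_arsinh_le[of s]]
      by (simp add: abs_mult)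
  qed measurable
  moreover have "integrable lborel n" and "integral\<^sup>L lborel n = 1"
    using assms by (simp_all add: n_def)
  moreover have "n s * (1 - s / sqrt (s\<^sup>2 + 1)) * (c + 2 * arsinh s) = c * n s + 2 * A s - c * B s - 2 * C s" for s
    by (simp add: A_def B_def C_def algebra_simps add_divide_distrib)
  ultimately have "(\<integral>s. n s * (1 - s / sqrt (s\<^sup>2 + 1)) * (c + 2 * arsinh s) \<partial>lborel) = c - 2 * integral\<^sup>L lborel C"
    by simp
  then show ?thesis
    unfolding n_def C_def[abs_def] .
qed

lemma tendsto_exp_two_arsinh_at_bot: "((\<lambda>s::real. exp (2 * arsinh s)) \<longlongrightarrow> 0) at_bot"
proof -
  have "filterlim (\<lambda>s::real. 2 * arsinh s :: real) at_bot at_bot"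
    by (rule filterlim_tendsto_pos_mult_at_bot[OF tendsto_const _ arsinh_real_at_bot]) simp
  then show ?thesis
    by (rule filterlim_compose[OF exp_at_bot])
qed

lemma filterlim_exp_two_arsinh_at_top: "filterlim (\<lambda>s::real. exp (2 * arsinh s)) at_top at_top"
proof -
  have "filterlim (\<lambda>s::real. 2 * arsinh s :: real) at_top at_top"
    by (rule filterlim_tendsto_pos_mult_at_top[OF tendsto_const _ arsinh_real_at_top]) simp
  then show ?thesis
    by (rule filterlim_compose[OF exp_at_top])
qed

lemma set_integral_Ioi_substitution:
  fixes g g' h :: "real \<Rightarrow> real"
  assumes deriv: "\<And>s. (g has_real_derivative g' s) (at s)" and cont_g': "\<And>s. isCont g' s"
    and g'_nonneg: "\<And>s. g' s \<ge> 0"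
    and h_measurable [measurable]: "h \<in> borel_measurable borel" and cont_h: "\<And>s. isCont h (g s)"
    and lim_bot: "(g \<longlongrightarrow> 0) at_bot" and lim_top: "filterlim g at_top at_top"
    and int: "integrable lborel (\<lambda>s. g' s * h (g s))"
  shows "set_integrable lborel {0<..} h"
    and "(LBINT x:{0<..}. h x) = (\<integral>s. g' s * h (g s) \<partial>lborel)"
proof -
  have lim_bot': "((ereal \<circ> g \<circ> real_of_ereal) \<longlongrightarrow> ereal 0) (at_right (-\<infinity>))"
    and lim_top': "((ereal \<circ> g \<circ> real_of_ereal) \<longlongrightarrow> \<infinity>) (at_left \<infinity>)"
    using lim_bot lim_top unfolding ereal_tendsto_simps1 ereal_tendsto_simps2 by simp_all
  have "\<bar>h (g s)\<bar> * g' s = \<bar>g' s * h (g s)\<bar>" for s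
    using g'_nonneg[of s] by (simp add: abs_mult)
  then have "set_integrable lborel (einterval (-\<infinity>) \<infinity>) (\<lambda>s. \<bar>h (g s)\<bar> * g' s)"
    using int by (simp add: set_integrable_def)
  then have "set_integrable lborel (einterval (ereal 0) \<infinity>) (\<lambda>x. \<bar>h x\<bar>)"
    by (intro interval_integral_substitution_nonneg(1)[OF _ deriv _ _ _ _ lim_bot' lim_top'])
       (auto intro: isCont_rabs[OF cont_h] cont_g' g'_nonneg)
  then show h_int: "set_integrable lborel {0<..} h"
    by (subst set_integrable_abs_iff'[symmetric]) simp_all
  have "(LBINT x=ereal 0..\<infinity>. h x) = (LBINT s=-\<infinity>..\<infinity>. g' s *\<^sub>R h (g s))"
  proof (rule interval_integral_substitution_integrable[OF _ deriv _ _ _ lim_bot' lim_top'])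
    show "set_integrable lborel (einterval (-\<infinity>) \<infinity>) (\<lambda>s. g' s *\<^sub>R h (g s))"
      using int by (simp add: set_integrable_def)
    show "set_integrable lborel (einterval (ereal 0) \<infinity>) h"
      using h_int by simp
  qed (auto intro: cont_h cont_g' g'_nonneg)
  then show "(LBINT x:{0<..}. h x) = (\<integral>s. g' s * h (g s) \<partial>lborel)"
    by (simp add: interval_integral_to_infinity_eq interval_lebesgue_integral_le_eq set_lebesgue_integral_def)
qed

lemma ln_IG_density_arsinh_subst:
  fixes m lam :: real
  assumes m: "m > 0" and lam: "lam > 0"
  defines "\<sigma> \<equiv> sqrt (m / lam) / 2"
  shows "set_integrable lborel {0<..} (\<lambda>x. ln x * IG_density m lam x)"
    and "(LBINT x:{0<..}. ln x * IG_density m lam x)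
       = (\<integral>s. normal_density 0 \<sigma> s * (1 - s / sqrt (s\<^sup>2 + 1)) * (ln m + 2 * arsinh s) \<partial>lborel)"
proof -
  define g where "g s = m * exp (2 * arsinh s)" for s
  define g' where "g' s = 2 * m * exp (2 * arsinh s) / sqrt (s\<^sup>2 + 1)" for s
  have composite: "g' s * (ln (g s) * IG_density m lam (g s))
      = normal_density 0 \<sigma> s * (1 - s / sqrt (s\<^sup>2 + 1)) * (ln m + 2 * arsinh s)" for s
  proof -
    have "g' s * (ln (g s) * IG_density m lam (g s)) = (ln m + 2 * arsinh s) * (g' s * IG_density m lam (g s))"
      using m by (simp add: g_def ln_mult)
    also have "\<dots> = normal_density 0 \<sigma> s * (1 - s / sqrt (s\<^sup>2 + 1)) * (ln m + 2 * arsinh s)"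
      unfolding g_def g'_def IG_density_arsinh_subst[OF m lam] by (simp add: \<sigma>_def mult.commute)
    finally show ?thesis .
  qed
  have "(g has_real_derivative g' s) (at s)" for s
    unfolding g_def[abs_def] g'_def by (auto intro!: derivative_eq_intros)
  moreover have "isCont g' s" and "g' s \<ge> 0" for s
    using m add_nonneg_pos[OF zero_le_power2[of s] zero_less_one]
    unfolding g'_def by (auto intro!: continuous_intros)
  moreover have "isCont (\<lambda>x. ln x * IG_density m lam x) (g s)" for s
    using m unfolding g_def IG_density_def by (auto intro!: continuous_intros)
  moreover have "(g \<longlongrightarrow> m * 0) at_bot"
    unfolding g_def[abs_def] by (intro tendsto_mult tendsto_const tendsto_exp_two_arsinh_at_bot)
  moreover have "filterlim g at_top at_top"
    unfolding g_def[abs_def]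
    by (rule filterlim_tendsto_pos_mult_at_top[OF tendsto_const m filterlim_exp_two_arsinh_at_top])
  moreover have "integrable lborel (\<lambda>s. g' s * (ln (g s) * IG_density m lam (g s)))"
    unfolding composite using m lam by (intro integrable_normal_arsinh) (simp add: \<sigma>_def)
  ultimately show "set_integrable lborel {0<..} (\<lambda>x. ln x * IG_density m lam x)"
    and "(LBINT x:{0<..}. ln x * IG_density m lam x)
       = (\<integral>s. normal_density 0 \<sigma> s * (1 - s / sqrt (s\<^sup>2 + 1)) * (ln m + 2 * arsinh s) \<partial>lborel)"
    using set_integral_Ioi_substitution[of g g' "\<lambda>x. ln x * IG_density m lam x"] by (simp_all add: composite)
qed

section \<open>A Gaussian integral of arsinh\<close>

lemma lborel_integral_even:
  fixes f :: "real \<Rightarrow> real"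
  assumes f: "integrable lborel f" and even: "\<And>x. f (- x) = f x"
  shows "(\<integral>x. f x \<partial>lborel) = 2 * (LBINT x:{0<..}. f x)"
proof -
  define H where "H x = indicator {0<..} x * f x" for x
  have H: "integrable lborel H"
    unfolding H_def using integrable_mult_indicator[OF _ f, of "{0<..}"] by simp
  have "AE x in lborel. f x = H x + H (- x)"
    using AE_lborel_singleton[of 0] by eventually_elim (auto simp: H_def indicator_def even)
  then have "(\<integral>x. f x \<partial>lborel) = (\<integral>x. H x + H (- x) \<partial>lborel)"
    using f H lborel_integrable_real_affine[OF H, of "-1" 0]
    by (intro integral_cong_AE) (auto simp: borel_measurable_integrable)
  also have "\<dots> = (\<integral>x. H x \<partial>lborel) + (\<integral>x. H (- x) \<partial>lborel)"
    using H lborel_integrable_real_affine[OF H, of "-1" 0] by simp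
  also have "(\<integral>x. H (- x) \<partial>lborel) = (\<integral>x. H x \<partial>lborel)"
    using lborel_integral_real_affine[of "-1" H 0] by simp
  finally show ?thesis
    by (simp add: H_def set_lebesgue_integral_def)
qed

lemma set_integral_substitution_square:
  fixes h :: "real \<Rightarrow> real"
  assumes int: "set_integrable lborel {0<..} (\<lambda>s. h (s\<^sup>2) * (2 * s))"
    and cont: "\<And>q. q > 0 \<Longrightarrow> isCont h q" and nonneg: "\<And>q. q > 0 \<Longrightarrow> h q \<ge> 0"
  shows "set_integrable lborel {0<..} h"
    and "(LBINT q:{0<..}. h q) = (LBINT s:{0<..}. h (s\<^sup>2) * (2 * s))"
proof -
  have lims: "((ereal \<circ> power2 \<circ> real_of_ereal) \<longlongrightarrow> ereal 0) (at_right (ereal 0))"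
             "((ereal \<circ> power2 \<circ> real_of_ereal) \<longlongrightarrow> \<infinity>) (at_left \<infinity>)"
    unfolding ereal_tendsto_simps1 ereal_tendsto_simps2
    by (auto intro!: tendsto_eq_intros filterlim_pow_at_top filterlim_ident)
  note subst = interval_integral_substitution_nonneg[of "ereal 0" \<infinity> power2 "\<lambda>s. 2 * s" h,
      OF _ _ _ _ _ _ lims]
  have "set_integrable lborel (einterval (ereal 0) \<infinity>) h"
    "(LBINT q=ereal 0..\<infinity>. h q) = (LBINT s=ereal 0..\<infinity>. h (s\<^sup>2) * (2 * s))"
    by (rule subst; use int in \<open>auto intro!: derivative_eq_intros cont nonneg\<close>)+
  then show "set_integrable lborel {0<..} h"
    and "(LBINT q:{0<..}. h q) = (LBINT s:{0<..}. h (s\<^sup>2) * (2 * s))"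
    by (simp_all add: interval_integral_to_infinity_eq)
qed

lemma nn_integral_arsinh_div_sqrt:
  fixes s :: real
  assumes s: "s \<ge> 0"
  shows "(\<integral>\<^sup>+t. ennreal (1 / (s\<^sup>2 + 1 - t\<^sup>2)) * indicator {0..s} t \<partial>lborel)
       = ennreal (arsinh s / sqrt (s\<^sup>2 + 1))"
proof -
  define R where "R = sqrt (s\<^sup>2 + 1)"
  have R: "R > 0" "s < R" "R\<^sup>2 = s\<^sup>2 + 1"
    using real_sqrt_less_mono[of "s\<^sup>2" "s\<^sup>2 + 1"] s by (simp_all add: R_def add_nonneg_pos)
  have "artanh (s / R) = arsinh s"
    using artanh_tanh_real[of "arsinh s"] by (simp add: tanh_def cosh_arsinh_real R_def)
  moreover have "(\<integral>\<^sup>+t. ennreal (1 / (s\<^sup>2 + 1 - t\<^sup>2)) * indicator {0..s} t \<partial>lborel)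
      = ennreal (artanh (s / R) / R - artanh (0 / R) / R)"
  proof (rule nn_integral_FTC_Icc)
    fix t assume t: "t \<in> {0..s}"
    then have lt: "\<bar>t / R\<bar> < 1" and pos: "s\<^sup>2 + 1 - t\<^sup>2 > 0"
      using R power_strict_mono[of t R 2] by (auto simp: abs_div_pos)
    have "((\<lambda>t. artanh (t / R) / R) has_real_derivative 1 / (1 - (t / R)\<^sup>2) * (1 / R) / R) (at t)"
      by (intro DERIV_cdivide DERIV_chain2[where f=artanh and g="\<lambda>t. t / R", OF artanh_real_has_field_derivative[OF lt]])
         (auto intro!: derivative_eq_intros)
    moreover have "R\<^sup>2 - t\<^sup>2 > 0"
      using R(3) pos by simp
    then have "1 / (1 - (t / R)\<^sup>2) * (1 / R) / R = 1 / (R\<^sup>2 - t\<^sup>2)"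
      using R(1) by (simp add: field_simps power2_eq_square power4_eq_xxxx)
    ultimately show "((\<lambda>t. artanh (t / R) / R) has_real_derivative 1 / (s\<^sup>2 + 1 - t\<^sup>2)) (at t)"
      using R by simp
    show "0 \<le> 1 / (s\<^sup>2 + 1 - t\<^sup>2)"
      using pos by simp
  qed (use s in auto)
  ultimately show ?thesis
    by (simp add: R_def)
qed

definition arsinh_kernel :: "real \<Rightarrow> real \<Rightarrow> real \<Rightarrow> ennreal" where
  "arsinh_kernel a t q = ennreal (if 0 \<le> t \<and> t\<^sup>2 \<le> q then exp (- a * q) / (q + 1 - t\<^sup>2) else 0)"

lemma borel_measurable_arsinh_kernel [measurable]:
  "(\<lambda>(t, q). arsinh_kernel a t q) \<in> borel_measurable (lborel \<Otimes>\<^sub>M lborel)"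
  unfolding arsinh_kernel_def by measurable

lemma nn_integral_arsinh_kernel_fst:
  "(\<integral>\<^sup>+t. arsinh_kernel a t q \<partial>lborel)
     = ennreal (indicator {0..} q * (exp (- a * q) * arsinh (sqrt q) / sqrt (q + 1)))"
proof (cases "q \<ge> 0")
  case True
  have "arsinh_kernel a t q
      = ennreal (exp (- a * q)) * (ennreal (1 / ((sqrt q)\<^sup>2 + 1 - t\<^sup>2)) * indicator {0..sqrt q} t)" for t
    using True real_le_rsqrt[of t q] power_mono[of t "sqrt q" 2]
    by (auto simp: arsinh_kernel_def indicator_def ennreal_mult'[symmetric])
  then have "(\<integral>\<^sup>+t. arsinh_kernel a t q \<partial>lborel)
      = ennreal (exp (- a * q)) * (\<integral>\<^sup>+t. ennreal (1 / ((sqrt q)\<^sup>2 + 1 - t\<^sup>2)) * indicator {0..sqrt q} t \<partial>lborel)"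
    by (simp add: nn_integral_cmult)
  also have "\<dots> = ennreal (exp (- a * q)) * ennreal (arsinh (sqrt q) / sqrt (q + 1))"
    using True nn_integral_arsinh_div_sqrt[OF real_sqrt_ge_zero[OF True]] by simp
  finally show ?thesis
    using True by (simp add: ennreal_mult'[symmetric])
next
  case False
  then have "\<not> (0 \<le> t \<and> t\<^sup>2 \<le> q)" for t
    using zero_le_power2[of t] by linarith
  then have "arsinh_kernel a t q = 0" for t
    by (simp add: arsinh_kernel_def)
  then show ?thesis
    using False by simp
qed

lemma nn_integral_arsinh_kernel_snd:
  "(\<integral>\<^sup>+q. arsinh_kernel a t q \<partial>lborel)
     = ennreal (indicator {0..} t * exp (- a * t\<^sup>2))
       * (\<integral>\<^sup>+b. ennreal (indicator {0..} b * (exp (- a * b) / (1 + b))) \<partial>lborel)"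
proof (cases "t \<ge> 0")
  case True
  have "(\<integral>\<^sup>+q. arsinh_kernel a t q \<partial>lborel) = (\<integral>\<^sup>+b. arsinh_kernel a t (t\<^sup>2 + 1 * b) \<partial>lborel)"
    using nn_integral_real_affine[of "arsinh_kernel a t" 1 "t\<^sup>2"] by simp
  also have "\<dots> = (\<integral>\<^sup>+b. ennreal (exp (- a * t\<^sup>2))
      * ennreal (indicator {0..} b * (exp (- a * b) / (1 + b))) \<partial>lborel)"
    using True by (intro nn_integral_cong)
      (auto simp: arsinh_kernel_def indicator_def ennreal_mult'[symmetric] exp_add[symmetric] algebra_simps)
  finally show ?thesis
    using True by (simp add: nn_integral_cmult)
qed (simp add: arsinh_kernel_def)

lemma nn_integral_exp_arsinh_factorise:
  fixes a :: real
  shows "(\<integral>\<^sup>+q. ennreal (indicator {0..} q * (exp (- a * q) * arsinh (sqrt q) / sqrt (q + 1))) \<partial>lborel)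
       = (\<integral>\<^sup>+t. ennreal (indicator {0..} t * exp (- a * t\<^sup>2)) \<partial>lborel)
         * (\<integral>\<^sup>+b. ennreal (indicator {0..} b * (exp (- a * b) / (1 + b))) \<partial>lborel)"
proof -
  have "(\<integral>\<^sup>+q. ennreal (indicator {0..} q * (exp (- a * q) * arsinh (sqrt q) / sqrt (q + 1))) \<partial>lborel)
      = (\<integral>\<^sup>+q. \<integral>\<^sup>+t. arsinh_kernel a t q \<partial>lborel \<partial>lborel)"
    by (simp add: nn_integral_arsinh_kernel_fst)
  also have "\<dots> = (\<integral>\<^sup>+t. \<integral>\<^sup>+q. arsinh_kernel a t q \<partial>lborel \<partial>lborel)"
    using lborel_pair.Fubini[OF borel_measurable_arsinh_kernel] by simp
  finally show ?thesis
    by (simp add: nn_integral_arsinh_kernel_snd nn_integral_multc)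
qed

lemma nn_integral_gaussian_half:
  fixes a :: real
  assumes a: "a > 0"
  shows "(\<integral>\<^sup>+t. ennreal (indicator {0..} t * exp (- a * t\<^sup>2)) \<partial>lborel) = ennreal (sqrt (pi / a) / 2)"
proof -
  define c where "c = 1 / sqrt a"
  have c: "c > 0" and c_sq: "a * c\<^sup>2 = 1"
    using a by (simp_all add: c_def power_divide)
  have "(\<integral>\<^sup>+t. ennreal (indicator {0..} t * exp (- a * t\<^sup>2)) \<partial>lborel)
      = ennreal c * (\<integral>\<^sup>+x. ennreal (indicator {0..} x * exp (- x\<^sup>2)) \<partial>lborel)"
    using nn_integral_real_affine[of "\<lambda>t. ennreal (indicator {0..} t * exp (- a * t\<^sup>2))" c 0] c c_sq
    by (simp add: power_mult_distrib zero_le_mult_iff indicator_def mult.assoc[symmetric])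
  also have "(\<integral>\<^sup>+x. ennreal (indicator {0..} x * exp (- x\<^sup>2)) \<partial>lborel) = ennreal (sqrt pi / 2)"
    using nn_integral_eq_integral[OF integrable.intros[OF gaussian_moment_0]]
      has_bochner_integral_integral_eq[OF gaussian_moment_0] by simp
  also have "ennreal c * ennreal (sqrt pi / 2) = ennreal (sqrt (pi / a) / 2)"
    using a c by (simp add: c_def ennreal_mult'[symmetric] real_sqrt_divide)
  finally show ?thesis .
qed

lemma nn_integral_eq_set_integral_Ioi:
  fixes f :: "real \<Rightarrow> real"
  assumes f: "set_integrable lborel {0<..} f" and nonneg: "\<And>x. x > 0 \<Longrightarrow> f x \<ge> 0"
  shows "(\<integral>\<^sup>+x. ennreal (indicator {0..} x * f x) \<partial>lborel) = ennreal (LBINT x:{0<..}. f x)"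
proof -
  have "(\<integral>\<^sup>+x. ennreal (indicator {0..} x * f x) \<partial>lborel)
      = (\<integral>\<^sup>+x. ennreal (indicator {0<..} x *\<^sub>R f x) \<partial>lborel)"
    by (rule nn_integral_cong_AE, rule AE_mp[OF AE_lborel_singleton[of 0] AE_I2]) (auto simp: indicator_def)
  also have "\<dots> = ennreal (LBINT x:{0<..}. f x)"
    unfolding set_lebesgue_integral_def using f nonneg
    by (intro nn_integral_eq_integral) (auto simp: set_integrable_def indicator_def)
  finally show ?thesis .
qed

lemma set_integral_exp_div_rescale:
  fixes a :: real
  assumes a: "a > 0"
  shows "(LBINT b:{0<..}. exp (- a * b) / (1 + b)) = (LBINT u:{0<..}. exp (- u) / (u + a))"
proof -
  have "(LBINT u:{0<..}. exp (- u) / (u + a))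
      = a * (LBINT b. indicator {0<..} (a * b) * (exp (- (a * b)) / (a * b + a)))"
    using lborel_integral_real_affine[of a "\<lambda>u. indicator {0<..} u * (exp (- u) / (u + a))" 0] a
    by (simp add: set_lebesgue_integral_def)
  also have "\<dots> = (LBINT b. indicator {0<..} b * (exp (- a * b) / (1 + b)))"
    unfolding integral_mult_right_zero[symmetric]
  proof (rule Bochner_Integration.integral_cong[OF refl])
    fix b :: real
    have "a * (exp (- (a * b)) / (a * b + a)) = exp (- a * b) / (1 + b)" if "b > 0"
    proof -
      have "a * b + a = a * (1 + b)"
        by (simp add: algebra_simps)
      then show ?thesis
        using a that by simp
    qed
    then show "a * (indicator {0<..} (a * b) * (exp (- (a * b)) / (a * b + a)))
        = indicator {0<..} b * (exp (- a * b) / (1 + b))"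
      using a by (auto simp: indicator_def zero_less_mult_iff)
  qed
  finally show ?thesis
    by (simp add: set_lebesgue_integral_def)
qed

lemma has_bochner_integral_exp_arsinh_sqrt:
  fixes a :: real
  assumes a: "a > 0"
  shows "has_bochner_integral lborel
           (\<lambda>q. indicator {0<..} q * (exp (- a * q) * arsinh (sqrt q) / sqrt (q + 1)))
           (sqrt (pi / a) / 2 * (LBINT b:{0<..}. exp (- a * b) / (1 + b)))"
proof (rule has_bochner_integral_nn_integral)
  define B where "B = (LBINT b:{0<..}. exp (- a * b) / (1 + b))"
  have B_int: "set_integrable lborel {0<..} (\<lambda>b. exp (- a * b) / (1 + b))"
  proof (rule set_integrable_bound[OF integrable_I0i_exp_mscale[OF a]])
    show "AE b in lborel. b \<in> {0<..} \<longrightarrow> norm (exp (- a * b) / (1 + b)) \<le> norm (exp (- (b * a)))"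
      by (intro AE_I2) (auto simp: divide_le_eq mult.commute)
  qed (simp add: set_borel_measurable_def)
  have "B \<ge> 0"
    unfolding B_def set_lebesgue_integral_def by (intro integral_nonneg_AE AE_I2) (simp add: indicator_def)
  then show "0 \<le> sqrt (pi / a) / 2 * B"
    using a by simp
  have "indicator {0<..} q * (exp (- a * q) * arsinh (sqrt q) / sqrt (q + 1))
      = indicator {0..} q * (exp (- a * q) * arsinh (sqrt q) / sqrt (q + 1))" for q :: real
    by (cases "q = 0") (simp_all add: indicator_def)
  then have "(\<integral>\<^sup>+q. ennreal (indicator {0<..} q * (exp (- a * q) * arsinh (sqrt q) / sqrt (q + 1))) \<partial>lborel)
      = (\<integral>\<^sup>+t. ennreal (indicator {0..} t * exp (- a * t\<^sup>2)) \<partial>lborel)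
        * (\<integral>\<^sup>+b. ennreal (indicator {0..} b * (exp (- a * b) / (1 + b))) \<partial>lborel)"
    by (simp only: nn_integral_exp_arsinh_factorise)
  also have "\<dots> = ennreal (sqrt (pi / a) / 2) * ennreal B"
    unfolding nn_integral_gaussian_half[OF a] B_def
    by (subst nn_integral_eq_set_integral_Ioi[OF B_int]) auto
  also have "\<dots> = ennreal (sqrt (pi / a) / 2 * B)"
    using a by (simp add: ennreal_mult'[symmetric])
  finally show "(\<integral>\<^sup>+q. ennreal (indicator {0<..} q * (exp (- a * q) * arsinh (sqrt q) / sqrt (q + 1))) \<partial>lborel)
      = ennreal (sqrt (pi / a) / 2 * (LBINT b:{0<..}. exp (- a * b) / (1 + b)))"
    by (simp add: B_def)
qed (auto simp: indicator_def)

lemma integral_normal_arsinh_ratio: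
  fixes \<sigma> :: real
  assumes \<sigma>: "\<sigma> > 0"
  defines "a \<equiv> 1 / (2 * \<sigma>\<^sup>2)"
  shows "(\<integral>s. normal_density 0 \<sigma> s * (s * arsinh s / sqrt (s\<^sup>2 + 1)) \<partial>lborel)
       = (LBINT b:{0<..}. exp (- a * b) / (1 + b)) / 2"
proof -
  define k where "k s = s * arsinh s / sqrt (s\<^sup>2 + 1)" for s
  define h where "h q = exp (- a * q) * arsinh (sqrt q) / sqrt (q + 1)" for q
  define c where "c = 1 / sqrt (2 * pi * \<sigma>\<^sup>2)"
  have a: "a > 0" and c: "c > 0" and ca: "c * sqrt (pi / a) = 1"
    using \<sigma> by (simp_all add: a_def c_def real_sqrt_divide real_sqrt_mult)
  have square: "h (s\<^sup>2) * (2 * s) = 2 / c * (normal_density 0 \<sigma> s * k s)" if "s > 0" for s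
    using that \<sigma> by (simp add: h_def k_def normal_density_def a_def c_def)
  have int: "integrable lborel (\<lambda>s. normal_density 0 \<sigma> s * k s)"
  proof (rule integrable_normal_density_mult[OF \<sigma>, where a=0 and b=1])
    show "\<bar>k s\<bar> \<le> 0 + 1 * \<bar>s - 0\<bar>" for s
      using mult_mono[OF abs_div_sqrt_square_plus_one_le[of s] abs_arsinh_le[of s]]
      by (simp add: k_def abs_mult)
  qed (simp add: k_def[abs_def])
  then have "set_integrable lborel {0<..} (\<lambda>s. 2 / c * (normal_density 0 \<sigma> s * k s))"
    using integrable_mult_indicator[OF _ int, of "{0<..}"]
    by (intro set_integrable_mult_right) (simp add: set_integrable_def)
  moreover have "set_integrable lborel {0<..} (\<lambda>s. 2 / c * (normal_density 0 \<sigma> s * k s))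
      = set_integrable lborel {0<..} (\<lambda>s. h (s\<^sup>2) * (2 * s))"
    by (rule set_integrable_cong) (auto simp: square)
  moreover have "isCont h q" and "h q \<ge> 0" if "q > 0" for q
    unfolding h_def[abs_def] using that by (auto intro!: continuous_intros)
  ultimately have subst: "(LBINT q:{0<..}. h q) = (LBINT s:{0<..}. h (s\<^sup>2) * (2 * s))"
    using set_integral_substitution_square(2)[of h] by simp
  have "(\<integral>s. normal_density 0 \<sigma> s * k s \<partial>lborel) = 2 * (LBINT s:{0<..}. normal_density 0 \<sigma> s * k s)"
    using int by (rule lborel_integral_even) (simp add: k_def normal_density_def)
  also have "\<dots> = c * (LBINT s:{0<..}. h (s\<^sup>2) * (2 * s))"
  proof -
    have "(LBINT s:{0<..}. h (s\<^sup>2) * (2 * s)) = (LBINT s:{0<..}. 2 / c * (normal_density 0 \<sigma> s * k s))"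
      by (rule set_lebesgue_integral_cong) (auto simp: square)
    then show ?thesis
      using c by (simp add: set_integral_mult_right)
  qed
  also have "(LBINT s:{0<..}. h (s\<^sup>2) * (2 * s)) = (LBINT q:{0<..}. h q)"
    by (rule subst[symmetric])
  also have "\<dots> = sqrt (pi / a) / 2 * (LBINT b:{0<..}. exp (- a * b) / (1 + b))"
    using has_bochner_integral_integral_eq[OF has_bochner_integral_exp_arsinh_sqrt[OF a]]
    by (simp add: set_lebesgue_integral_def h_def)
  finally show ?thesis
    using ca by (simp add: k_def)
qed

lemma E_log_IG_eq_integral:
  fixes W :: real
  assumes W: "W > 0"
  shows "E_log_IG W = - ln W - (LBINT u:{0<..}. exp (- u) / (u + 2 * W))"
proof -
  define \<sigma> where "\<sigma> = sqrt (1 / W / 1) / 2"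
  have \<sigma>: "\<sigma> > 0" and a: "1 / (2 * \<sigma>\<^sup>2) = 2 * W"
    using W by (simp_all add: \<sigma>_def power_divide)
  have "E_log_IG W
      = (\<integral>s. normal_density 0 \<sigma> s * (1 - s / sqrt (s\<^sup>2 + 1)) * (ln (1 / W) + 2 * arsinh s) \<partial>lborel)"
    unfolding E_log_IG_def \<sigma>_def using W by (intro ln_IG_density_arsinh_subst(2)) simp_all
  also have "\<dots> = ln (1 / W) - 2 * (\<integral>s. normal_density 0 \<sigma> s * (s * arsinh s / sqrt (s\<^sup>2 + 1)) \<partial>lborel)"
    by (rule integral_normal_arsinh_symmetrise[OF \<sigma>])
  also have "(\<integral>s. normal_density 0 \<sigma> s * (s * arsinh s / sqrt (s\<^sup>2 + 1)) \<partial>lborel)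
      = (LBINT b:{0<..}. exp (- (2 * W) * b) / (1 + b)) / 2"
    using integral_normal_arsinh_ratio[OF \<sigma>] by (simp only: a)
  also have "(LBINT b:{0<..}. exp (- (2 * W) * b) / (1 + b)) = (LBINT u:{0<..}. exp (- u) / (u + 2 * W))"
    using W by (intro set_integral_exp_div_rescale) simp
  finally show ?thesis
    using W by (simp add: ln_div)
qed

section \<open>The integral of \<open>(ln t + \<gamma>) e\<^sup>-\<^sup>t\<close>\<close>

lemma has_bochner_integral_Gamma_real:
  fixes s :: real
  assumes s: "s > 0"
  shows "has_bochner_integral lborel (\<lambda>t. indicator {0<..} t * (t powr (s - 1) * exp (- t))) (Gamma s)"
proof (rule has_bochner_integral_nn_integral)
  have "indicator {0..} t * t powr (s - 1) / exp t = indicator {0<..} t * (t powr (s - 1) * exp (- t))" for t :: real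
    by (cases "t = 0") (auto simp: indicator_def exp_minus field_simps)
  then show "(\<integral>\<^sup>+t. ennreal (indicator {0<..} t * (t powr (s - 1) * exp (- t))) \<partial>lborel) = ennreal (Gamma s)"
    using Gamma_conv_nn_integral_real[OF s] by simp
qed (use Gamma_real_pos[OF s] in \<open>auto simp: indicator_def\<close>)

lemma has_bochner_integral_exp_minus_Ioi:
  "has_bochner_integral lborel (\<lambda>t. indicator {0<..} t * exp (- t)) (1 :: real)"
  using has_bochner_integral_I0i_power_exp_m[of 0] by (simp add: mult.commute)

lemma abs_powr_diff_quotient_le:
  fixes t h :: real
  assumes t: "t > 0" and h: "0 < h" "h \<le> 1"
  shows "\<bar>(t powr h - 1) / h\<bar> \<le> 2 * t powr (-1/2) + t powr 2"
proof (cases "t \<le> 1")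
  case True
  have "t powr h = exp (h * ln t)"
    using t by (simp add: powr_def)
  then have "1 - t powr h \<le> - (h * ln t)"
    using exp_ge_add_one_self[of "h * ln t"] by linarith
  moreover have "t powr h \<le> 1"
    using powr_mono2[of h t 1] True t h by simp
  ultimately have "\<bar>(t powr h - 1) / h\<bar> \<le> - ln t"
    using h by (simp add: abs_of_nonpos divide_nonpos_pos minus_divide_left divide_le_eq mult.commute)
  also have "\<dots> \<le> 2 * t powr (-1/2)"
    using ln_le_minus_one[of "t powr (-1/2)"] t by (simp add: ln_powr)
  also have "\<dots> \<le> 2 * t powr (-1/2) + t powr 2"
    by simp
  finally show ?thesis .
next
  case False
  have "t powr h - 1 \<le> h * (ln t * t powr h)"
    using exp_ge_add_one_self[of "- (h * ln t)"] exp_gt_zero[of "h * ln t"] t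
    by (simp add: powr_def exp_minus field_simps)
  also have "\<dots> \<le> h * (t * t)"
    using False h ln_le_minus_one[of t] powr_mono[of h 1 t]
    by (intro mult_left_mono mult_mono) auto
  finally have "\<bar>(t powr h - 1) / h\<bar> \<le> t * t"
    using False h ge_one_powr_ge_zero[of t h] by (simp add: divide_le_eq mult.commute)
  also have "t * t \<le> 2 * t powr (-1/2) + t powr 2"
    using t powr_ge_zero[of t "-1/2"] by (simp add: powr_numeral power2_eq_square)
  finally show ?thesis .
qed

lemma tendsto_powr_diff_quotient:
  fixes t :: real
  assumes "t > 0"
  shows "((\<lambda>h. (t powr h - 1) / h) \<longlongrightarrow> ln t) (at 0)"
proof -
  have "((\<lambda>h. exp (h * ln t)) has_real_derivative exp (0 * ln t) * ln t) (at 0)"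
    by (auto intro!: derivative_eq_intros)
  then show ?thesis
    using assms by (simp add: DERIV_def powr_def)
qed

lemma has_bochner_integral_Gamma_diff_quotient:
  fixes h :: real
  assumes h: "h > 0"
  shows "has_bochner_integral lborel (\<lambda>t. indicator {0<..} t * ((t powr h - 1) / h * exp (- t)))
           ((Gamma (1 + h) - 1) / h)"
proof -
  have "has_bochner_integral lborel (\<lambda>t. (indicator {0<..} t * (t powr (1 + h - 1) * exp (- t))
      - indicator {0<..} t * (t powr (1 - 1) * exp (- t))) / h) ((Gamma (1 + h) - Gamma 1) / h)"
    using h by (intro has_bochner_integral_divide_zero has_bochner_integral_diff has_bochner_integral_Gamma_real)
      simp_all
  moreover have "(\<lambda>t. (indicator {0<..} t * (t powr (1 + h - 1) * exp (- t))
      - indicator {0<..} t * (t powr (1 - 1) * exp (- t))) / h)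
      = (\<lambda>t. indicator {0<..} t * ((t powr h - 1) / h * exp (- t)))"
    by (rule ext) (auto simp: indicator_def field_simps)
  ultimately show ?thesis
    by simp
qed

lemma integrable_powr_diff_quotient_bound:
  "integrable lborel (\<lambda>t::real. indicator {0<..} t * ((2 * t powr (-1/2) + t powr 2) * exp (- t)))"
proof -
  have "integrable lborel (\<lambda>t::real. 2 * (indicator {0<..} t * (t powr (1/2 - 1) * exp (- t)))
      + indicator {0<..} t * (t powr (3 - 1) * exp (- t)))"
    using has_bochner_integral_Gamma_real[of "1/2"] has_bochner_integral_Gamma_real[of 3]
    by (intro Bochner_Integration.integrable_add integrable_mult_right) (auto intro: integrable.intros)
  then show ?thesis
    by (rule back_subst[where P="integrable lborel"]) (auto simp: indicator_def algebra_simps)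
qed

text \<open>\<open>\<Gamma>'(1) = -\<gamma>\<close>, by dominated convergence applied to the difference quotients of \<open>\<Gamma>\<close> at 1.\<close>
lemma has_bochner_integral_ln_exp:
  "has_bochner_integral lborel (\<lambda>t::real. indicator {0<..} t * (ln t * exp (- t))) (- euler_mascheroni)"
proof -
  define h where "h k = 1 / (real k + 2)" for k :: nat
  define s where "s k t = indicator {0<..} t * ((t powr h k - 1) / h k * exp (- t))" for k t
  define f where "f t = indicator {0<..} t * (ln t * exp (- t))" for t :: real
  define w where "w t = indicator {0<..} t * ((2 * t powr (-1/2) + t powr 2) * exp (- t))" for t :: real
  have h: "0 < h k" "h k \<le> 1" "h k \<noteq> 0" for k
    unfolding h_def by auto
  have "h \<longlonglongrightarrow> 0"
    unfolding h_def[abs_def] by real_asymp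
  then have h_lim: "filterlim h (at 0) sequentially"
    unfolding filterlim_at using h by (auto intro!: always_eventually)
  have Gamma_quotient: "((\<lambda>y. (Gamma (1 + y) - Gamma 1) / y) \<longlongrightarrow> Gamma 1 * Digamma 1) (at (0::real))"
    using has_field_derivative_Gamma[of "1::real" UNIV] by (simp add: DERIV_def)
  have s_int: "(\<integral>t. s k t \<partial>lborel) = (Gamma (1 + h k) - 1) / h k" for k
    unfolding s_def by (rule has_bochner_integral_integral_eq[OF has_bochner_integral_Gamma_diff_quotient[OF h(1)]])
  have s_lim: "(\<lambda>k. \<integral>t. s k t \<partial>lborel) \<longlonglongrightarrow> - euler_mascheroni"
    using filterlim_compose[OF Gamma_quotient h_lim] by (simp add: s_int)
  have pointwise: "AE t in lborel. (\<lambda>k. s k t) \<longlonglongrightarrow> f t"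
  proof (rule AE_I2)
    fix t :: real
    show "(\<lambda>k. s k t) \<longlonglongrightarrow> f t"
    proof (cases "t > 0")
      case True
      from tendsto_mult_right[OF filterlim_compose[OF tendsto_powr_diff_quotient[OF True] h_lim], of "exp (- t)"]
      show ?thesis
        using True by (simp add: s_def f_def)
    qed (simp add: s_def f_def)
  qed
  have bound: "AE t in lborel. norm (s k t) \<le> w t" for k
  proof (rule AE_I2)
    fix t :: real
    show "norm (s k t) \<le> w t"
    proof (cases "t > 0")
      case True
      then have "\<bar>(t powr h k - 1) / h k\<bar> * exp (- t) \<le> (2 * t powr (-1/2) + t powr 2) * exp (- t)"
        by (intro mult_right_mono abs_powr_diff_quotient_le h) simp_all
      then show ?thesis
        using True by (simp add: s_def w_def abs_mult)
    qed (simp add: s_def w_def)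
  qed
  have [measurable]: "s k \<in> borel_measurable lborel" "f \<in> borel_measurable lborel" for k
    unfolding s_def f_def by measurable
  note w_int = integrable_powr_diff_quotient_bound[folded w_def]
  have "integrable lborel f"
    by (rule integrable_dominated_convergence[OF _ _ w_int pointwise bound]) simp_all
  moreover have "(\<lambda>k. \<integral>t. s k t \<partial>lborel) \<longlonglongrightarrow> (\<integral>t. f t \<partial>lborel)"
    by (rule integral_dominated_convergence[OF _ _ w_int pointwise bound]) simp_all
  then have "(\<integral>t. f t \<partial>lborel) = - euler_mascheroni"
    using s_lim by (rule LIMSEQ_unique)
  ultimately show ?thesis
    unfolding f_def has_bochner_integral_iff by simp
qed

lemma ln_plus_euler_exp_integral:
  shows "set_integrable lborel {0<..} (\<lambda>t::real. (ln t + euler_mascheroni) * exp (- t))"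
    and "(LBINT t:{0<..}. (ln t + euler_mascheroni) * exp (- t :: real)) = 0"
proof -
  have "has_bochner_integral lborel (\<lambda>t::real. indicator {0<..} t * (ln t * exp (- t))
      + euler_mascheroni * (indicator {0<..} t * exp (- t))) (- euler_mascheroni + euler_mascheroni * 1)"
    by (rule has_bochner_integral_add[OF has_bochner_integral_ln_exp
        has_bochner_integral_mult_right[OF has_bochner_integral_exp_minus_Ioi]])
  moreover have "(\<lambda>t::real. indicator {0<..} t * (ln t * exp (- t)) + euler_mascheroni * (indicator {0<..} t * exp (- t)))
      = (\<lambda>t. indicator {0<..} t * ((ln t + euler_mascheroni) * exp (- t)))"
    by (auto simp: algebra_simps)
  ultimately have "has_bochner_integral lborel
      (\<lambda>t::real. indicator {0<..} t * ((ln t + euler_mascheroni) * exp (- t))) 0"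
    by simp
  then show "set_integrable lborel {0<..} (\<lambda>t::real. (ln t + euler_mascheroni) * exp (- t))"
    and "(LBINT t:{0<..}. (ln t + euler_mascheroni) * exp (- t :: real)) = 0"
    by (simp_all add: set_integrable_def set_lebesgue_integral_def has_bochner_integral_iff)
qed

lemma interval_integral_ln_plus_euler_exp_eq:
  fixes x :: real
  assumes x: "x > 0"
  shows "(LBINT t=0..x. (ln t + euler_mascheroni) * exp (- t)) = - (LBINT t:{x<..}. (ln t + euler_mascheroni) * exp (- t))"
    and "(LBINT t=0..x. (ln t + euler_mascheroni) * exp (- t)) = (LBINT t:{0<..<x}. (ln t + euler_mascheroni) * exp (- t))"
proof -
  have "(LBINT t=ereal 0..ereal x. (ln t + euler_mascheroni) * exp (- t))
      + (LBINT t=ereal x..\<infinity>. (ln t + euler_mascheroni) * exp (- t))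
      = (LBINT t=ereal 0..\<infinity>. (ln t + euler_mascheroni) * exp (- t))"
    using x ln_plus_euler_exp_integral(1)
    by (intro interval_integral_sum) (simp add: interval_integrable_to_infinity_eq min_def)
  then show "(LBINT t=0..x. (ln t + euler_mascheroni) * exp (- t)) = - (LBINT t:{x<..}. (ln t + euler_mascheroni) * exp (- t))"
    using ln_plus_euler_exp_integral(2) by (simp add: interval_integral_to_infinity_eq zero_ereal_def)
  show "(LBINT t=0..x. (ln t + euler_mascheroni) * exp (- t)) = (LBINT t:{0<..<x}. (ln t + euler_mascheroni) * exp (- t))"
    using x by (simp add: interval_lebesgue_integral_le_eq zero_ereal_def)
qed

lemma set_integrable_exp_div_Ioi:
  fixes x :: real
  assumes x: "x > 0"
  shows "set_integrable lborel {x<..} (\<lambda>v. exp (- v) / v)"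
proof -
  have "set_integrable lborel {x<..} (\<lambda>v. exp (- v))"
    by (rule set_integrable_subset[where A="{0<..}"])
       (use x integrable.intros[OF has_bochner_integral_exp_minus_Ioi] in \<open>auto simp: set_integrable_def\<close>)
  then show ?thesis
  proof (rule set_integrable_bound[OF set_integrable_mult_right[where a="1 / x"]])
    show "AE v in lborel. v \<in> {x<..} \<longrightarrow> norm (exp (- v) / v) \<le> norm (1 / x * exp (- v))"
      using x by (auto intro!: AE_I2 simp: field_simps mult_left_mono)
  qed (simp add: set_borel_measurable_def)
qed

lemma exp_integral_Ioi_eq:
  fixes x :: real
  assumes x: "x > 0"
  shows "(LBINT v:{x<..}. exp (- v) / v)
       = - (LBINT t=0..x. (ln t + euler_mascheroni) * exp (- t)) - (ln x + euler_mascheroni) * exp (- x)"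
proof -
  define \<phi> where "\<phi> t = (ln t + euler_mascheroni) * exp (- t)" for t :: real
  define F where "F t = - (ln t + euler_mascheroni) * exp (- t)" for t :: real
  have \<phi>_int: "set_integrable lborel {x<..} \<phi>"
    unfolding \<phi>_def[abs_def]
    by (rule set_integrable_subset[OF ln_plus_euler_exp_integral(1)]) (use x in auto)
  note E1_int = set_integrable_exp_div_Ioi[OF x]
  have "(LBINT t=ereal x..\<infinity>. \<phi> t - exp (- t) / t) = 0 - F x"
  proof (rule interval_integral_FTC_integrable)
    fix t assume "ereal x < ereal t"
    then have t: "t > 0"
      using x by simp
    show "(F has_vector_derivative \<phi> t - exp (- t) / t) (at t)"
      unfolding F_def \<phi>_def has_real_derivative_iff_has_vector_derivative[symmetric] using t
      by (auto intro!: derivative_eq_intros simp: field_simps)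
    show "isCont (\<lambda>t. \<phi> t - exp (- t) / t) t"
      unfolding \<phi>_def using t by (intro continuous_intros) auto
  next
    show "set_integrable lborel (einterval (ereal x) \<infinity>) (\<lambda>t. \<phi> t - exp (- t) / t)"
      using set_integral_diff(1)[OF \<phi>_int E1_int] by simp
    have "isCont F x"
      unfolding F_def using x by (intro continuous_intros) auto
    then have "(F \<longlongrightarrow> F x) (at_right x)"
      unfolding isCont_def by (rule tendsto_mono[OF at_le, rotated]) simp
    then show "((F \<circ> real_of_ereal) \<longlongrightarrow> F x) (at_right (ereal x))"
      unfolding ereal_tendsto_simps1 .
    show "((F \<circ> real_of_ereal) \<longlongrightarrow> 0) (at_left \<infinity>)"
      unfolding ereal_tendsto_simps1 F_def by real_asymp
  qed simp
  then have "(LBINT t:{x<..}. \<phi> t) - (LBINT v:{x<..}. exp (- v) / v) = (ln x + euler_mascheroni) * exp (- x)"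
    using \<phi>_int E1_int
    by (simp add: interval_integral_to_infinity_eq set_integral_diff F_def) (simp add: algebra_simps)
  then show ?thesis
    using interval_integral_ln_plus_euler_exp_eq(1)[OF x] by (simp add: \<phi>_def[abs_def])
qed

lemma set_integral_exp_div_add_eq:
  fixes x :: real
  assumes x: "x > 0"
  shows "(LBINT u:{0<..}. exp (- u) / (u + x))
       = - exp x * (LBINT t=0..x. (ln t + euler_mascheroni) * exp (- t)) - (ln x + euler_mascheroni)"
proof -
  define U where "U = (LBINT u:{0<..}. exp (- u) / (u + x))"
  define J where "J = (LBINT t=0..x. (ln t + euler_mascheroni) * exp (- t))"
  have "(LBINT v:{x<..}. exp (- v) / v)
      = (LBINT u. indicator {x<..} (x + 1 * u) * (exp (- (x + 1 * u)) / (x + 1 * u)))"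
    using lborel_integral_real_affine[of 1 "\<lambda>v. indicator {x<..} v * (exp (- v) / v)" x]
    by (simp add: set_lebesgue_integral_def)
  also have "\<dots> = exp (- x) * U"
    unfolding U_def set_lebesgue_integral_def integral_mult_right_zero[symmetric]
    by (rule Bochner_Integration.integral_cong) (auto simp: indicator_def exp_add[symmetric] add.commute)
  finally have E1: "exp (- x) * U = - J - (ln x + euler_mascheroni) * exp (- x)"
    using exp_integral_Ioi_eq[OF x] by (simp add: J_def)
  have inv: "exp x * exp (- x) = 1"
    by (simp add: exp_minus_inverse)
  have "U = exp x * (exp (- x) * U)"
    using inv by (simp add: mult.assoc[symmetric])
  also have "\<dots> = - exp x * J - (ln x + euler_mascheroni) * (exp x * exp (- x))"
    unfolding E1 by (simp add: algebra_simps)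
  finally show ?thesis
    unfolding U_def[symmetric] J_def[symmetric] inv by simp
qed

lemma E_log_IG_eq_exp_mult_integral:
  fixes W :: real
  assumes W: "W > 0"
  shows "E_log_IG W
       = exp (2 * W) * (LBINT t=0..2 * W. (ln t + euler_mascheroni) * exp (- t)) + (euler_mascheroni + ln 2)"
proof -
  have "ln (2 * W) = ln 2 + ln W"
    using W by (simp add: ln_mult)
  then show ?thesis
    using E_log_IG_eq_integral[OF W] set_integral_exp_div_add_eq[of "2 * W"] W by simp
qed

section \<open>Bounds and the limit at 0\<close>

text \<open>The integrand changes sign only at \<open>t = e\<^sup>-\<^sup>\<gamma>\<close>: integrate over \<open>(0, x)\<close> or over \<open>(x, \<infinity>)\<close>
  according to the side of \<open>e\<^sup>-\<^sup>\<gamma>\<close> on which \<open>x\<close> lies.\<close>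
lemma interval_integral_ln_plus_euler_exp_nonpos:
  fixes x :: real
  assumes x: "x > 0"
  shows "(LBINT t=0..x. (ln t + euler_mascheroni) * exp (- t)) \<le> 0"
proof (cases "ln x + euler_mascheroni \<le> 0")
  case True
  have "0 \<le> (LBINT t:{0<..<x}. - ((ln t + euler_mascheroni) * exp (- t)))"
    unfolding set_lebesgue_integral_def
  proof (rule integral_nonneg_AE, rule AE_I2)
    fix t :: real
    have "ln t + euler_mascheroni \<le> 0" if "t \<in> {0<..<x}"
    proof -
      have "ln t < ln x"
        using that by simp
      then show ?thesis
        using True by simp
    qed
    then show "0 \<le> indicator {0<..<x} t *\<^sub>R - ((ln t + euler_mascheroni) * exp (- t))"
      by (simp add: indicator_def mult_nonpos_nonneg)
  qed
  then show ?thesis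
    using interval_integral_ln_plus_euler_exp_eq(2)[OF x] by (simp add: set_lebesgue_integral_def)
next
  case False
  have "0 \<le> (LBINT t:{x<..}. (ln t + euler_mascheroni) * exp (- t))"
    unfolding set_lebesgue_integral_def
  proof (rule integral_nonneg_AE, rule AE_I2)
    fix t :: real
    have "ln t + euler_mascheroni \<ge> 0" if "t \<in> {x<..}"
    proof -
      have "ln x < ln t"
        using that x by simp
      then show ?thesis
        using False by simp
    qed
    then show "0 \<le> indicator {x<..} t *\<^sub>R ((ln t + euler_mascheroni) * exp (- t))"
      by (simp add: indicator_def)
  qed
  then show ?thesis
    using interval_integral_ln_plus_euler_exp_eq(1)[OF x] by simp
qed

lemma set_integral_ln_plus_euler_Ioo:
  fixes x :: real
  assumes x: "x > 0" and small: "ln x + euler_mascheroni \<le> 0"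
  shows "set_integrable lborel {0<..<x} (\<lambda>t. ln t + euler_mascheroni)"
    and "(LBINT t:{0<..<x}. ln t + euler_mascheroni) = x * ln x - x + euler_mascheroni * x"
proof -
  define F where "F t = - (t * ln t - t + euler_mascheroni * t)" for t :: real
  define f where "f t = - (ln t + euler_mascheroni)" for t :: real
  have "isCont F x"
    unfolding F_def using x by (intro continuous_intros) auto
  then have "(F \<longlongrightarrow> F x) (at_left x)"
    unfolding isCont_def by (rule tendsto_mono[OF at_le, rotated]) simp
  then have lim_x: "((F \<circ> real_of_ereal) \<longlongrightarrow> F x) (at_left (ereal x))"
    unfolding ereal_tendsto_simps1 .
  have lim_0: "((F \<circ> real_of_ereal) \<longlongrightarrow> 0) (at_right (ereal 0))"
    unfolding ereal_tendsto_simps1 F_def by real_asymp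
  have deriv: "(F has_real_derivative f t) (at t)" and cont: "isCont f t" if "ereal 0 < ereal t" for t
    using that unfolding F_def f_def by (auto intro!: derivative_eq_intros continuous_intros)
  have "f t \<ge> 0" if "t < x" "t > 0" for t
  proof -
    have "ln t < ln x"
      using that by simp
    then show ?thesis
      using small by (simp add: f_def)
  qed
  then have "AE t in lborel. ereal 0 < ereal t \<longrightarrow> ereal t < ereal x \<longrightarrow> 0 \<le> f t"
    by (intro AE_I2) simp
  moreover have "ereal 0 < ereal x"
    using x by simp
  ultimately have "set_integrable lborel (einterval (ereal 0) (ereal x)) f"
    and "(LBINT t=ereal 0..ereal x. f t) = F x - 0"
    using interval_integral_FTC_nonneg[OF _ deriv cont _ lim_0 lim_x] by blast+
  then have f_int: "set_integrable lborel {0<..<x} f" and f_eq: "(LBINT t:{0<..<x}. f t) = F x"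
    using x by (simp_all add: interval_lebesgue_integral_le_eq)
  have neg: "(\<lambda>t. ln t + euler_mascheroni) = (\<lambda>t. - f t)"
    by (simp add: f_def fun_eq_iff)
  show "set_integrable lborel {0<..<x} (\<lambda>t. ln t + euler_mascheroni)"
    unfolding neg using f_int by (simp add: set_integrable_def)
  show "(LBINT t:{0<..<x}. ln t + euler_mascheroni) = x * ln x - x + euler_mascheroni * x"
    unfolding neg set_integral_uminus[OF f_int] f_eq by (simp add: F_def)
qed

lemma interval_integral_ln_plus_euler_exp_lower:
  fixes x :: real
  assumes x: "x > 0" and small: "ln x + euler_mascheroni \<le> 0"
  shows "x * ln x - x + euler_mascheroni * x \<le> (LBINT t=0..x. (ln t + euler_mascheroni) * exp (- t))"
proof -
  have "(LBINT t:{0<..<x}. ln t + euler_mascheroni) \<le> (LBINT t:{0<..<x}. (ln t + euler_mascheroni) * exp (- t))"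
  proof (rule set_integral_mono)
    show "set_integrable lborel {0<..<x} (\<lambda>t. ln t + euler_mascheroni)"
      by (rule set_integral_ln_plus_euler_Ioo(1)[OF x small])
    show "set_integrable lborel {0<..<x} (\<lambda>t. (ln t + euler_mascheroni) * exp (- t))"
      by (rule set_integrable_subset[OF ln_plus_euler_exp_integral(1)]) auto
    fix t assume t: "t \<in> {0<..<x}"
    then have "ln t < ln x"
      by simp
    then have "ln t + euler_mascheroni \<le> 0"
      using small by simp
    then have "(ln t + euler_mascheroni) * 1 \<le> (ln t + euler_mascheroni) * exp (- t)"
      using t by (intro mult_left_mono_neg) auto
    then show "ln t + euler_mascheroni \<le> (ln t + euler_mascheroni) * exp (- t)"
      by simp
  qed
  then show ?thesis
    using set_integral_ln_plus_euler_Ioo(2)[OF x small] interval_integral_ln_plus_euler_exp_eq(2)[OF x]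
    by simp
qed

lemma exp_div_add_minus_indicator_le:
  fixes x u :: real
  assumes x: "x > 0"
  shows "indicator {0<..} u * (exp (- u) / (u + x)) - 1 / (u + x) * indicator {0..1} u
       \<le> 1 / (1 + x) * (indicator {0<..} u * exp (- u) - indicator {0..1} u)"
proof (cases "u < 0")
  case False
  define c where "c = 1 / (1 + x)"
  have "indicator {0<..} u * (exp (- u) / (u + x)) - 1 / (u + x) * indicator {0..1} u
      - c * (indicator {0<..} u * exp (- u) - indicator {0..1} u)
      = (indicator {0<..} u * exp (- u) - indicator {0..1} u) * (1 / (u + x) - c)"
    by (simp add: algebra_simps)
  also have "\<dots> \<le> 0"
  proof (cases "u \<le> 1")
    case True
    have "indicator {0<..} u * exp (- u) \<le> (1::real)"
      using False by (simp add: indicator_def)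
    moreover have "c \<le> 1 / (u + x)"
      unfolding c_def using True False x by (intro divide_left_mono) auto
    ultimately show ?thesis
      using True False by (intro mult_nonpos_nonneg) (auto simp: indicator_def)
  next
    case False
    have "1 / (u + x) \<le> c"
      unfolding c_def using False x by (intro divide_left_mono) auto
    then show ?thesis
      using False by (intro mult_nonneg_nonpos) (auto simp: indicator_def)
  qed
  finally show ?thesis
    by (simp add: c_def)
qed (simp add: indicator_def)

text \<open>Both \<open>e\<^sup>-\<^sup>u\<close> and the indicator of \<open>[0, 1]\<close> have mass 1, and their difference changes sign
  at 1, where the decreasing weight \<open>1 / (u + x)\<close> is compared with its value.\<close>
lemma set_integral_exp_div_add_le:
  fixes x :: real
  assumes x: "x > 0"
  shows "(LBINT u:{0<..}. exp (- u) / (u + x)) \<le> ln (1 + x) - ln x"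
proof -
  have exp: "has_bochner_integral lborel (\<lambda>u::real. indicator {0<..} u * exp (- u)) 1"
    by (rule has_bochner_integral_exp_minus_Ioi)
  have log: "has_bochner_integral lborel (\<lambda>u. 1 / (u + x) * indicator {0..1} u) (ln (1 + x) - ln (0 + x))"
    using x by (intro has_bochner_integral_FTC_Icc_nonneg) (auto intro!: derivative_eq_intros)
  have box: "has_bochner_integral lborel (indicator {0..1 :: real} :: real \<Rightarrow> real) 1"
    using has_bochner_integral_real_indicator[of "{0..1 :: real}" lborel] by simp
  have U_int: "integrable lborel (\<lambda>u. indicator {0<..} u * (exp (- u) / (u + x)))"
  proof (rule Bochner_Integration.integrable_bound)
    show "integrable lborel (\<lambda>u. 1 / x * (indicator {0<..} u * exp (- u)))"
      using exp by (intro integrable_mult_right) (rule integrable.intros)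
    show "AE u in lborel. norm (indicator {0<..} u * (exp (- u) / (u + x)))
        \<le> norm (1 / x * (indicator {0<..} u * exp (- u)))"
      using x by (intro AE_I2) (auto simp: indicator_def field_simps mult_left_mono)
  qed measurable
  have "(LBINT u. indicator {0<..} u * (exp (- u) / (u + x)) - 1 / (u + x) * indicator {0..1} u)
      \<le> (LBINT u. 1 / (1 + x) * (indicator {0<..} u * exp (- u) - indicator {0..1} u))"
    using U_int integrable.intros[OF log] integrable.intros[OF exp] integrable.intros[OF box]
    by (intro integral_mono exp_div_add_minus_indicator_le x) auto
  then show ?thesis
    using U_int integrable.intros[OF log] integrable.intros[OF exp] integrable.intros[OF box]
      has_bochner_integral_integral_eq[OF log] has_bochner_integral_integral_eq[OF exp]
      has_bochner_integral_integral_eq[OF box]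
    by (simp add: set_lebesgue_integral_def)
qed

lemma exp_le_2_if_le_exp_minus_euler:
  fixes x :: real
  assumes "x \<le> exp (- euler_mascheroni)"
  shows "exp x \<le> 2"
proof -
  have "exp (euler_mascheroni :: real) \<ge> 3 / 2"
    using exp_ge_add_one_self[of "euler_mascheroni :: real"] euler_mascheroni_gt_19_over_33 by linarith
  then have "exp (- euler_mascheroni :: real) \<le> 2 / 3"
    by (simp add: exp_minus field_simps)
  then have "x \<le> ln 2"
    using assms ln2_ge_two_thirds by linarith
  then show ?thesis
    by (metis exp_le_cancel_iff exp_ln zero_less_numeral)
qed

lemma E_log_IG_bounds:
  fixes W :: real
  assumes W: "W > 0"
  shows "- ln (W + 1 / 2) \<le> E_log_IG W" and "E_log_IG W \<le> - ln W"
    and "E_log_IG W \<le> euler_mascheroni + ln 2"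
proof -
  have "0 \<le> (LBINT u:{0<..}. exp (- u) / (u + 2 * W))"
    unfolding set_lebesgue_integral_def using W by (intro integral_nonneg_AE AE_I2) (simp add: indicator_def)
  then show "E_log_IG W \<le> - ln W"
    using E_log_IG_eq_integral[OF W] by simp
  have "ln (1 + 2 * W) - ln (2 * W) = ln (W + 1 / 2) - ln W"
    using W ln_mult[of 2 "W + 1 / 2"] ln_mult[of 2 W] by (simp add: algebra_simps)
  then show "- ln (W + 1 / 2) \<le> E_log_IG W"
    using E_log_IG_eq_integral[OF W] set_integral_exp_div_add_le[of "2 * W"] W by simp
  have "exp (2 * W) * (LBINT t=0..2 * W. (ln t + euler_mascheroni) * exp (- t)) \<le> 0"
    using interval_integral_ln_plus_euler_exp_nonpos[of "2 * W"] W by (simp add: mult_nonneg_nonpos)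
  then show "E_log_IG W \<le> euler_mascheroni + ln 2"
    using E_log_IG_eq_exp_mult_integral[OF W] by simp
qed

lemma E_log_IG_lower_bound_small:
  fixes W :: real
  assumes W: "0 < W" "W \<le> exp (- euler_mascheroni) / 2"
  shows "euler_mascheroni + ln 2 + 4 * W * (ln W + (euler_mascheroni + ln 2) - 1) \<le> E_log_IG W"
proof -
  define x where "x = 2 * W"
  have x: "x > 0" "x \<le> exp (- euler_mascheroni)"
    using W by (simp_all add: x_def)
  then have small: "ln x + euler_mascheroni \<le> 0"
    using ln_le_cancel_iff[of x "exp (- euler_mascheroni)"] by simp
  define m where "m = x * ln x - x + euler_mascheroni * x"
  have "m = x * (ln x + euler_mascheroni - 1)"
    by (simp add: m_def algebra_simps)
  then have "m \<le> 0"
    using x small by (simp add: mult_nonneg_nonpos)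
  then have "2 * m \<le> exp x * m"
    using exp_le_2_if_le_exp_minus_euler[OF x(2)] by (intro mult_right_mono_neg) auto
  also have "\<dots> \<le> exp x * (LBINT t=0..x. (ln t + euler_mascheroni) * exp (- t))"
    unfolding m_def using interval_integral_ln_plus_euler_exp_lower[OF x(1) small] by simp
  finally have "2 * m \<le> exp x * (LBINT t=0..x. (ln t + euler_mascheroni) * exp (- t))" .
  moreover have "2 * m = 4 * W * (ln W + (euler_mascheroni + ln 2) - 1)"
    unfolding m_def x_def using W by (simp add: ln_mult algebra_simps)
  ultimately show ?thesis
    using E_log_IG_eq_exp_mult_integral[OF W(1)] by (simp add: x_def)
qed

lemma E_log_IG_tendsto_at_right_0: "(E_log_IG \<longlongrightarrow> euler_mascheroni + ln 2) (at_right 0)"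
proof (rule tendsto_sandwich)
  have small: "eventually (\<lambda>W. 0 < W \<and> W \<le> exp (- euler_mascheroni) / 2) (at_right (0::real))"
    unfolding eventually_at_right_field by (rule exI[of _ "exp (- euler_mascheroni) / 2"]) auto
  show "eventually (\<lambda>W. euler_mascheroni + ln 2 + 4 * W * (ln W + (euler_mascheroni + ln 2) - 1) \<le> E_log_IG W)
      (at_right 0)"
    using small by eventually_elim (use E_log_IG_lower_bound_small in blast)
  show "eventually (\<lambda>W. E_log_IG W \<le> euler_mascheroni + ln 2) (at_right 0)"
    using small by eventually_elim (use E_log_IG_bounds in blast)
  show "((\<lambda>W::real. euler_mascheroni + ln 2 + 4 * W * (ln W + (euler_mascheroni + ln 2) - 1))
      \<longlongrightarrow> euler_mascheroni + ln 2) (at_right 0)"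
    by real_asymp
qed simp

theorem lemmaA3:
  fixes c2 :: real
  defines "c2 \<equiv> euler_mascheroni + ln 2"
  shows "(\<forall>W>0. set_integrable lborel {0<..} (\<lambda>x. ln x * IG_density (1 / W) 1 x)
            \<and> E_log_IG W = - ln W - (LBINT u:{0<..}. exp (- u) / (u + 2 * W))
            \<and> E_log_IG W = exp (2 * W) * (LBINT t=0..2 * W. (ln t + euler_mascheroni) * exp (- t)) + c2)
       \<and> (\<forall>W>0. - ln (W + 1 / 2) \<le> E_log_IG W \<and> E_log_IG W \<le> min (- ln W) c2)
       \<and> (\<forall>W. 0 < W \<and> W \<le> exp (- euler_mascheroni) / 2 \<longrightarrow>
            c2 + 4 * W * (ln W + c2 - 1) \<le> E_log_IG W \<and> E_log_IG W \<le> c2)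
       \<and> (E_log_IG \<longlongrightarrow> c2) (at_right 0)"
proof -
  have "set_integrable lborel {0<..} (\<lambda>x. ln x * IG_density (1 / W) 1 x)" if "W > 0" for W :: real
    using that by (intro ln_IG_density_arsinh_subst(1)) simp_all
  then show ?thesis
    unfolding c2_def
    using E_log_IG_eq_integral E_log_IG_eq_exp_mult_integral E_log_IG_bounds
      E_log_IG_lower_bound_small E_log_IG_tendsto_at_right_0
    by auto
qed

end
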